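(* Let $n,p$ be positive integers such that $p$ is odd and $n$ and $n+p$ are relatively prime. Let $\gamma_{n,p}(t)=(\sin(nt),\sin((n+p)t))$, $t_k=\frac{2\pi k}{4n(n+p)}$, and $\mathrm{Lisa}_{n,p}=\{\gamma_{n,p}(t_k): k=1,\ldots,4n(n+p)\}$. For $\mathcal{A}\in\mathrm{Lisa}_{n,p}$ set $w_{\mathcal{A}}=\frac{1}{4n(n+p)}$ if $\mathcal{A}$ lies on the boundary of the square $[-1,1]^2$ and $w_{\mathcal{A}}=\frac{2}{4n(n+p)}$ if $\mathcal{A}$ lies in the interior of $[-1,1]^2$. Then for all $P\in\Pi^Q_{n,p}$, \[ \frac{1}{\pi^2}\int_{-1}^1\int_{-1}^1 P(x,y)\frac{1}{\sqrt{1-x^2}}\frac{1}{\sqrt{1-y^2}}\,dx\,dy=\sum_{\mathcal{A}\in\mathrm{Lisa}_{n,p}} w_{\mathcal{A}}P(\mathcal{A}). \]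
   Context: $T_i(x)=\cos(i\arccos x)$ is the Chebyshev polynomial of the first kind of degree $i$. The index set is $\Gamma^Q_{n,p}=\{(i,j)\in\mathbb{N}_0^2: i+j\le 4n-1\}\cup\bigcup_{m=0}^{4p-1}\{(i,j)\in\mathbb{N}_0^2: i+j=4n+m,\ j<\frac{n(4p-m)}{p}\}$, and $\Pi^Q_{n,p}=\operatorname{span}\{T_i(x)T_j(y):(i,j)\in\Gamma^Q_{n,p}\}$. *)

theory Defs
  imports "HOL-Analysis.Analysis"
begin

definition cheb :: "nat \<Rightarrow> real \<Rightarrow> real" where
  "cheb i x = cos (real i * arccos x)"

definition GammaQ :: "nat \<Rightarrow> nat \<Rightarrow> (nat \<times> nat) set" where
  "GammaQ n p = {(i, j). i + j \<le> 4 * n - 1}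
     \<union> (\<Union>m\<in>{..<4 * p}. {(i, j). i + j = 4 * n + m
                                \<and> real j < real n * (4 * real p - real m) / real p})"

definition PiQ :: "nat \<Rightarrow> nat \<Rightarrow> (real \<times> real \<Rightarrow> real) set" where
  "PiQ n p = {P. \<exists>c :: nat \<times> nat \<Rightarrow> real.
      P = (\<lambda>(x, y). \<Sum>(i, j)\<in>GammaQ n p. c (i, j) * cheb i x * cheb j y)}"

definition lissajous :: "nat \<Rightarrow> nat \<Rightarrow> real \<Rightarrow> real \<times> real" where
  "lissajous n p t = (sin (real n * t), sin (real (n + p) * t))"

definition Lisa :: "nat \<Rightarrow> nat \<Rightarrow> (real \<times> real) set" where
  "Lisa n p = {lissajous n p (2 * pi * real k / real (4 * n * (n + p))) | k.
                 k \<in> {1..4 * n * (n + p)}}"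

definition lisa_weight :: "nat \<Rightarrow> nat \<Rightarrow> real \<times> real \<Rightarrow> real" where
  "lisa_weight n p A =
     (if \<bar>fst A\<bar> < 1 \<and> \<bar>snd A\<bar> < 1 then 2 / real (4 * n * (n + p))
      else 1 / real (4 * n * (n + p)))"

end

theory Submission
  imports Defs "HOL-Library.Real_Mod"
begin

(*
  Both sides are linear in P, so it suffices to consider the products T_i(x) T_j(y) with
  (i,j) in Gamma^Q_{n,p}. For the Chebyshev weight these are orthogonal on [-1,1]^2, so the
  left-hand side is the coefficient of T_0(x) T_0(y).

  On the right-hand side, the curve passes through a boundary point of the square at exactly one
  of the N = 4n(n+p) nodes gamma(t_k) and through an interior point at exactly two of them, so the
  weighted sum is the mean of P over the nodes. Since T_i(sin t) = cos(i(pi/2 - t)), the mean of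
  T_i T_j over the nodes is a sum of two equispaced cosine sums, which vanish unless N divides
  i n + j(n+p) or i n - j(n+p). For (i,j) in Gamma^Q_{n,p} other than (0,0), such a divisibility
  forces i = a(n+p), j = b n with a + b < 4 and 4 | a +- b; as p is odd, i +- j is then odd and
  the remaining phase factor cos((i +- j) pi/2) vanishes.
*)

abbreviation cheb_weight :: "real \<Rightarrow> real" where
  "cheb_weight x \<equiv> 1 / sqrt (1 - x\<^sup>2)"

section \<open>Chebyshev polynomials and the weighted integral\<close>

lemma cheb_cos: "cheb i (cos t) = cos (real i * t)"
proof -
  obtain k :: int where k: "arccos (cos t) = \<bar>t - of_int k * (2 * pi)\<bar>"
    by (rule arccos_cos_eq_abs_2pi)
  have "cos (real i * \<bar>t - of_int k * (2 * pi)\<bar>) = cos (real i * (t - of_int k * (2 * pi)))"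
    by (metis abs_mult abs_of_nat cos_abs_real)
  also have "\<dots> = cos (real i * t - 2 * pi * of_int (int i * k))"
    by (simp add: algebra_simps)
  also have "\<dots> = cos (real i * t)"
    by (simp only: cos_diff cos_int_2pin sin_int_2pin mult_1_right mult_zero_right add_0_right)
  finally show ?thesis
    by (simp add: cheb_def k)
qed

lemma cheb_sin: "cheb i (sin t) = cos (real i * (pi / 2 - t))"
  by (simp add: sin_cos_eq cheb_cos)

lemma interval_integral_FTC_nonneg_real:
  fixes F f :: "real \<Rightarrow> real" and a b :: real
  assumes "a < b"
    and F': "\<And>x. a < x \<Longrightarrow> x < b \<Longrightarrow> DERIV F x :> f x"
    and f_cont: "\<And>x. a < x \<Longrightarrow> x < b \<Longrightarrow> isCont f x"
    and f_nonneg: "\<And>x. a < x \<Longrightarrow> x < b \<Longrightarrow> 0 \<le> f x"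
    and F_cont: "continuous_on {a..b} F"
  shows "interval_lebesgue_integrable lborel a b f"
    and "(LBINT x=a..b. f x) = F b - F a"
proof -
  have "((F \<circ> real_of_ereal) \<longlongrightarrow> F a) (at_right (ereal a))"
    unfolding ereal_tendsto_simps1 using \<open>a < b\<close> by (rule continuous_on_Icc_at_rightD[OF F_cont])
  moreover have "((F \<circ> real_of_ereal) \<longlongrightarrow> F b) (at_left (ereal b))"
    unfolding ereal_tendsto_simps1 using \<open>a < b\<close> by (rule continuous_on_Icc_at_leftD[OF F_cont])
  ultimately have "set_integrable lborel (einterval a b) f \<and> (LBINT x=a..b. f x) = F b - F a"
    using interval_integral_FTC_nonneg[where F=F and f=f and a=a and b=b] assms by auto
  then show "interval_lebesgue_integrable lborel a b f" and "(LBINT x=a..b. f x) = F b - F a"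
    using \<open>a < b\<close> by (auto simp: interval_lebesgue_integrable_def)
qed

lemma cheb_weight_integral:
  shows "interval_lebesgue_integrable lborel (-1) 1 cheb_weight"
    and "(LBINT x=-1..1. cheb_weight x) = pi"
proof -
  have F': "DERIV (\<lambda>x. - arccos x) x :> cheb_weight x" if "-1 < x" "x < 1" for x
    using DERIV_arccos[OF that] DERIV_minus by (fastforce simp: divide_inverse)
  have f: "isCont cheb_weight x" "0 \<le> cheb_weight x" if "-1 < x" "x < 1" for x :: real
    using that abs_square_less_1[of x] by (auto intro!: continuous_intros)
  have F: "continuous_on {-1..1} (\<lambda>x. - arccos x)"
    by (intro continuous_intros continuous_on_arccos')
  show "interval_lebesgue_integrable lborel (-1) 1 cheb_weight"
    using interval_integral_FTC_nonneg_real(1)[of "-1" 1, OF _ F' f F] by (simp add: one_ereal_def)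
  show "(LBINT x=-1..1. cheb_weight x) = pi"
    using interval_integral_FTC_nonneg_real(2)[of "-1" 1, OF _ F' f F] by (simp add: one_ereal_def)
qed


(* The shift by 1 makes the integrand nonnegative, as the FTC for improper integrals requires. *)
lemma cheb_shifted_weighted_integral:
  assumes "i > 0"
  shows "interval_lebesgue_integrable lborel (-1) 1 (\<lambda>x. (1 + cheb i x) * cheb_weight x)"
    and "(LBINT x=-1..1. (1 + cheb i x) * cheb_weight x) = pi"
proof -
  define F where "F x = - sin (real i * arccos x) / real i - arccos x" for x
  have F': "DERIV F x :> (1 + cheb i x) * cheb_weight x" if x: "-1 < x" "x < 1" for x
    using x assms abs_square_less_1[of x] unfolding F_def cheb_def
    by (auto intro!: derivative_eq_intros DERIV_arccos[OF x] simp: field_simps)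
  have f: "isCont (\<lambda>x. (1 + cheb i x) * cheb_weight x) x"
      "0 \<le> (1 + cheb i x) * cheb_weight x" if x: "-1 < x" "x < 1" for x
  proof -
    have "0 \<le> 1 + cheb i x"
      using cos_ge_minus_one[of "real i * arccos x"] unfolding cheb_def by linarith
    moreover have "0 < 1 - x\<^sup>2"
      using x abs_square_less_1[of x] by simp
    ultimately show "0 \<le> (1 + cheb i x) * cheb_weight x"
      by simp
    show "isCont (\<lambda>x. (1 + cheb i x) * cheb_weight x) x"
      using x abs_square_less_1[of x] unfolding cheb_def
      by (auto intro!: continuous_intros isCont_arccos)
  qed
  have F_cont: "continuous_on {-1..1} F"
    unfolding F_def using assms by (intro continuous_intros continuous_on_arccos') auto
  note FTC = interval_integral_FTC_nonneg_real[of "-1" 1, OF _ F' f F_cont]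
  show "interval_lebesgue_integrable lborel (-1) 1 (\<lambda>x. (1 + cheb i x) * cheb_weight x)"
    and "(LBINT x=-1..1. (1 + cheb i x) * cheb_weight x) = pi"
    using FTC by (simp_all add: one_ereal_def F_def)
qed

lemma cheb_weighted_integral:
  shows "interval_lebesgue_integrable lborel (-1) 1 (\<lambda>x. cheb i x * cheb_weight x)"
    and "(LBINT x=-1..1. cheb i x * cheb_weight x) = (if i = 0 then pi else 0)"
proof -
  have "interval_lebesgue_integrable lborel (-1) 1 (\<lambda>x. cheb i x * cheb_weight x) \<and>
        (LBINT x=-1..1. cheb i x * cheb_weight x) = (if i = 0 then pi else 0)"
  proof (cases "i = 0")
    case True
    then show ?thesis
      using cheb_weight_integral by (simp add: cheb_def)
  next
    case False
    have eq: "(\<lambda>x. cheb i x * cheb_weight x) = (\<lambda>x. (1 + cheb i x) * cheb_weight x - cheb_weight x)"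
      by (simp add: fun_eq_iff diff_divide_distrib[symmetric])
    show ?thesis
      unfolding eq using cheb_shifted_weighted_integral[of i] cheb_weight_integral False
      by (subst interval_lebesgue_integral_diff) auto
  qed
  then show "interval_lebesgue_integrable lborel (-1) 1 (\<lambda>x. cheb i x * cheb_weight x)"
    and "(LBINT x=-1..1. cheb i x * cheb_weight x) = (if i = 0 then pi else 0)"
    by auto
qed

lemma interval_lebesgue_integral_sum:
  fixes f :: "'a \<Rightarrow> real \<Rightarrow> real"
  assumes "finite S" "\<And>s. s \<in> S \<Longrightarrow> interval_lebesgue_integrable lborel a b (f s)"
  shows "interval_lebesgue_integrable lborel a b (\<lambda>x. \<Sum>s\<in>S. f s x)"
    and "(LBINT x=a..b. (\<Sum>s\<in>S. f s x)) = (\<Sum>s\<in>S. LBINT x=a..b. f s x)"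
proof -
  have "interval_lebesgue_integrable lborel a b (\<lambda>x. \<Sum>s\<in>S. f s x) \<and>
        (LBINT x=a..b. (\<Sum>s\<in>S. f s x)) = (\<Sum>s\<in>S. LBINT x=a..b. f s x)"
    using assms
  proof (induction S rule: finite_induct)
    case empty
    then show ?case
      by (simp add: interval_lebesgue_integrable_def set_integrable_def)
  qed simp
  then show "interval_lebesgue_integrable lborel a b (\<lambda>x. \<Sum>s\<in>S. f s x)"
    and "(LBINT x=a..b. (\<Sum>s\<in>S. f s x)) = (\<Sum>s\<in>S. LBINT x=a..b. f s x)"
    by auto
qed

lemma cheb_expansion_weighted_integral:
  fixes c :: "nat \<times> nat \<Rightarrow> real"
  assumes "finite G" "(0, 0) \<in> G"
  shows "(LBINT x=-1..1. (LBINT y=-1..1.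
            (\<Sum>s\<in>G. c s * cheb (fst s) x * cheb (snd s) y) * cheb_weight x * cheb_weight y))
         = pi\<^sup>2 * c (0, 0)"
proof -
  define I where "I j = (if j = 0 then pi else 0)" for j :: nat
  note int = cheb_weighted_integral(1)
  have val: "(LBINT x=-1..1. cheb i x * cheb_weight x) = I i" for i
    using cheb_weighted_integral(2) by (simp add: I_def)
  have inner: "(LBINT y=-1..1. (\<Sum>s\<in>G. c s * cheb (fst s) x * cheb (snd s) y) * cheb_weight x * cheb_weight y)
      = (\<Sum>s\<in>G. c s * I (snd s) * (cheb (fst s) x * cheb_weight x))" for x
  proof -
    have "(LBINT y=-1..1. (\<Sum>s\<in>G. c s * cheb (fst s) x * cheb (snd s) y) * cheb_weight x * cheb_weight y)
        = (LBINT y=-1..1. (\<Sum>s\<in>G. (c s * cheb (fst s) x * cheb_weight x) * (cheb (snd s) y * cheb_weight y)))"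
      by (simp add: sum_distrib_right sum_divide_distrib mult_ac)
    also have "\<dots> = (\<Sum>s\<in>G. LBINT y=-1..1. (c s * cheb (fst s) x * cheb_weight x) * (cheb (snd s) y * cheb_weight y))"
      by (rule interval_lebesgue_integral_sum(2)[OF assms(1)])
        (intro interval_lebesgue_integrable_mult_right int)
    also have "\<dots> = (\<Sum>s\<in>G. c s * I (snd s) * (cheb (fst s) x * cheb_weight x))"
      by (intro sum.cong refl) (simp only: interval_lebesgue_integral_mult_right val, simp add: mult_ac)
    finally show ?thesis .
  qed
  have "(LBINT x=-1..1. (\<Sum>s\<in>G. c s * I (snd s) * (cheb (fst s) x * cheb_weight x)))
     = (\<Sum>s\<in>G. c s * I (snd s) * I (fst s))"
    by (simp only: interval_lebesgue_integral_sum(2)[OF assms(1)] interval_lebesgue_integrable_mult_right int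
        interval_lebesgue_integral_mult_right val)
  also have "\<dots> = (\<Sum>s\<in>G. if s = (0, 0) then pi\<^sup>2 * c (0, 0) else 0)"
    by (rule sum.cong) (auto simp: I_def power2_eq_square)
  also have "\<dots> = pi\<^sup>2 * c (0, 0)"
    using assms by simp
  finally show ?thesis
    unfolding inner .
qed

section \<open>The index set\<close>

lemma finite_GammaQ: "finite (GammaQ n p)"
proof (rule finite_subset)
  show "GammaQ n p \<subseteq> {0..4 * n + 4 * p} \<times> {0..4 * n + 4 * p}"
    unfolding GammaQ_def by auto
qed simp

lemma zero_in_GammaQ: "n > 0 \<Longrightarrow> (0, 0) \<in> GammaQ n p"
  unfolding GammaQ_def by auto

lemma GammaQ_multiple_bound:
  assumes "n > 0" "(a * (n + p), b * n) \<in> GammaQ n p"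
  shows "a + b < 4"
proof (cases "a * (n + p) + b * n \<le> 4 * n - 1")
  case True
  then have "(a + b) * n < 4 * n"
    using \<open>n > 0\<close> by (simp add: algebra_simps)
  then show ?thesis
    by simp
next
  case False
  then obtain m where m: "m < 4 * p" "a * (n + p) + b * n = 4 * n + m"
    and bound: "real (b * n) < real n * (4 * real p - real m) / real p"
    using assms(2) unfolding GammaQ_def by auto
  have "p > 0"
    using m(1) by simp
  then have "real (b * p) * real n < real (4 * p - m) * real n"
    using bound m(1) by (simp add: pos_less_divide_eq of_nat_diff algebra_simps)
  then have "b * p < 4 * p - m"
    using \<open>n > 0\<close> by (simp only: of_nat_mult[symmetric] of_nat_less_iff) simp
  then have "(a + b) * (n + p) < 4 * (n + p)"
    using m(2) by (simp add: algebra_simps)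
  then show ?thesis
    using mult_less_cancel2 by blast
qed

lemma cos_odd_mult_pi_half: "odd r \<Longrightarrow> cos (real_of_int r * pi / 2) = 0"
  by (auto simp: cos_zero_iff_int mult_ac)

lemma dvd_signed_combination_coprime:
  fixes s :: int
  assumes "n > 0" "q > 0" "coprime n q" "s \<in> {-1, 1}"
    and dvd: "int (4 * n * q) dvd int i * int n + s * (int j * int q)"
  obtains a b where "i = a * q" "j = b * n" "4 dvd int a + s * int b"
proof -
  have cop: "coprime (int n) (int q)"
    using assms(3) by (simp only: coprime_int_iff)
  have "int n dvd int i * int n + s * (int j * int q)"
    using dvd by (rule dvd_trans[rotated]) simp
  then have "int n dvd s * (int j * int q)"
    by (simp add: dvd_add_right_iff)
  then have "int n dvd int j"
    using assms(4) cop by (auto simp: coprime_dvd_mult_left_iff)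
  then obtain b where j: "j = b * n"
    by (metis dvd_def int_dvd_int_iff mult.commute)
  have "int q dvd int i * int n + s * (int j * int q)"
    using dvd by (rule dvd_trans[rotated]) simp
  then have "int q dvd int i * int n"
    by (simp add: dvd_add_left_iff)
  then have "int q dvd int i"
    using cop by (simp add: coprime_commute coprime_dvd_mult_left_iff)
  then obtain a where i: "i = a * q"
    by (metis dvd_def int_dvd_int_iff mult.commute)
  have "4 * int (n * q) dvd (int a + s * int b) * int (n * q)"
    using dvd by (simp add: i j algebra_simps)
  then have "4 dvd int a + s * int b"
    using assms(1,2) by simp
  with i j show thesis
    using that by blast
qed

lemma GammaQ_aliasing:
  fixes s :: int
  assumes "n > 0" "odd p" "coprime n (n + p)" "s \<in> {-1, 1}"
    and "(i, j) \<in> GammaQ n p"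
    and "int (4 * n * (n + p)) dvd int i * int n + s * (int j * int (n + p))"
  shows "(i, j) = (0, 0) \<or> cos (real_of_int (int i + s * int j) * pi / 2) = 0"
proof -
  obtain a b where i: "i = a * (n + p)" and j: "j = b * n" and four: "4 dvd int a + s * int b"
    using dvd_signed_combination_coprime[of n "n + p" s i j] assms(1,3,4,6) by auto
  have "a + b < 4"
    using GammaQ_multiple_bound[of n a p b] assms(1,5) by (simp add: i j)
  show ?thesis
  proof (cases "even a")
    case True
    then have "a = 0 \<and> b = 0"
      using four \<open>a + b < 4\<close> assms(4) by (auto; presburger)
    then show ?thesis
      by (simp add: i j)
  next
    case False
    have "int i + s * int j = (int a + s * int b) * int n + int a * int p"
      by (simp add: i j algebra_simps)
    moreover have "even (int a + s * int b)"
      using four by (rule dvd_trans[rotated]) simp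
    ultimately have "odd (int i + s * int j)"
      using False assms(2) by simp
    then show ?thesis
      using cos_odd_mult_pi_half by blast
  qed
qed

section \<open>Discrete orthogonality along the Lissajous curve\<close>

lemma cis_2pi_div_eq_1_iff:
  assumes "N > 0"
  shows "cis (2 * pi * of_int m / real N) = 1 \<longleftrightarrow> int N dvd m"
proof -
  have "2 * pi * of_int m / real N = of_int l * (2 * pi) \<longleftrightarrow> m = int N * l" for l
  proof -
    have "2 * pi * of_int m / real N = of_int l * (2 * pi) \<longleftrightarrow>
          real_of_int m = real_of_int (int N * l)"
      using assms by (auto simp: field_simps)
    then show ?thesis
      by (simp only: of_int_eq_iff)
  qed
  then show ?thesis
    unfolding cis_eq_1_iff dvd_def by auto
qed

lemma sum_cos_equispaced:
  fixes N :: nat and m :: int and a :: real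
  assumes "N > 0"
  shows "(\<Sum>k=1..N. cos (a + 2 * pi * of_int m * real k / real N)) =
         (if int N dvd m then real N * cos a else 0)"
proof -
  define z where "z = cis (2 * pi * of_int m / real N)"
  have "cis a * z ^ k = cis (a + 2 * pi * of_int m * real k / real N)" for k
    unfolding z_def Complex.DeMoivre cis_mult by (simp add: mult_ac)
  then have sum_Re: "(\<Sum>k=1..N. cos (a + 2 * pi * of_int m * real k / real N)) =
      Re (\<Sum>k=1..N. cis a * z ^ k)"
    by (simp add: Re_sum)
  show ?thesis
  proof (cases "int N dvd m")
    case True
    then have "z = 1"
      using cis_2pi_div_eq_1_iff[OF assms] by (simp add: z_def)
    then show ?thesis
      using True sum_Re by simp
  next
    case False
    then have "z \<noteq> 1"
      using cis_2pi_div_eq_1_iff[OF assms] by (simp add: z_def)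
    moreover have "z ^ N = 1"
      using assms by (simp only: z_def Complex.DeMoivre) simp
    ultimately have "(\<Sum>k<N. z ^ k) = 0"
      by (simp add: sum_gp_strict)
    moreover have "(\<Sum>k=1..N. cis a * z ^ k) = cis a * z * (\<Sum>k<N. z ^ k)"
      by (simp add: sum.atLeast1_atMost_eq sum_distrib_left mult_ac)
    ultimately show ?thesis
      using sum_Re False by simp
  qed
qed

definition lisa_node :: "nat \<Rightarrow> nat \<Rightarrow> nat \<Rightarrow> real \<times> real" where
  "lisa_node n p k = lissajous n p (2 * pi * real k / real (4 * n * (n + p)))"

lemma cheb_lisa_node_product:
  "cheb i (fst (lisa_node n p k)) * cheb j (snd (lisa_node n p k)) =
   (\<Sum>s\<in>{-1, 1}. cos (real_of_int (int i + s * int j) * pi / 2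
      + 2 * pi * of_int (- (int i * int n + s * (int j * int (n + p)))) * real k / real (4 * n * (n + p)))) / 2"
proof -
  define t where "t = 2 * pi * real k / real (4 * n * (n + p))"
  define w where "w = real i * (pi / 2 - real n * t)"
  define z where "z = real j * (pi / 2 - real (n + p) * t)"
  have arg: "w + of_int s * z = real_of_int (int i + s * int j) * pi / 2
      + 2 * pi * of_int (- (int i * int n + s * (int j * int (n + p)))) * real k / real (4 * n * (n + p))"
    for s :: int
    by (simp add: w_def z_def t_def algebra_simps add_divide_distrib diff_divide_distrib)
  have "cheb i (fst (lisa_node n p k)) * cheb j (snd (lisa_node n p k)) =
      (cos (w + of_int (-1) * z) + cos (w + of_int 1 * z)) / 2"
    by (simp add: lisa_node_def lissajous_def cheb_sin cos_times_cos w_def z_def t_def)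
  also have "\<dots> = (\<Sum>s\<in>{-1, 1}. cos (w + of_int s * z)) / 2"
    by simp
  finally show ?thesis
    unfolding arg .
qed

lemma lisa_node_cheb_sum:
  assumes "n > 0" "p > 0" "odd p" "coprime n (n + p)" "(i, j) \<in> GammaQ n p"
  shows "(\<Sum>k=1..4 * n * (n + p). cheb i (fst (lisa_node n p k)) * cheb j (snd (lisa_node n p k)))
         = (if (i, j) = (0, 0) then real (4 * n * (n + p)) else 0)"
proof -
  define N where "N = 4 * n * (n + p)"
  define \<phi> where "\<phi> s = real_of_int (int i + s * int j) * pi / 2" for s :: int
  define m where "m s = - (int i * int n + s * (int j * int (n + p)))" for s :: int
  have "N > 0"
    using assms(1,2) by (simp add: N_def)
  have "(\<Sum>k=1..N. cheb i (fst (lisa_node n p k)) * cheb j (snd (lisa_node n p k)))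
      = (\<Sum>s\<in>{-1, 1}. \<Sum>k=1..N. cos (\<phi> s + 2 * pi * of_int (m s) * real k / real N)) / 2"
    unfolding cheb_lisa_node_product sum_divide_distrib[symmetric] \<phi>_def m_def N_def
    by (subst sum.swap) (rule refl)
  also have "\<dots> = (\<Sum>s\<in>{-1, 1}. if int N dvd m s then real N * cos (\<phi> s) else 0) / 2"
    by (simp only: sum_cos_equispaced[OF \<open>N > 0\<close>])
  also have "\<dots> = (if (i, j) = (0, 0) then real N else 0)"
  proof (cases "(i, j) = (0, 0)")
    case True
    then show ?thesis
      by (simp add: \<phi>_def m_def)
  next
    case False
    have "(if int N dvd m s then real N * cos (\<phi> s) else 0) = 0" if "s \<in> {-1, 1}" for s
    proof -
      have "int N dvd m s \<longleftrightarrow> int (4 * n * (n + p)) dvd int i * int n + s * (int j * int (n + p))"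
        unfolding m_def N_def dvd_minus_iff ..
      then show ?thesis
        using GammaQ_aliasing[OF assms(1,3,4) that assms(5)] False by (auto simp: \<phi>_def)
    qed
    then show ?thesis
      using False by auto
  qed
  finally show ?thesis
    unfolding N_def .
qed

section \<open>Multiplicities of the nodes\<close>

lemma sin_pi_div_eq_0_iff:
  assumes "d > 0"
  shows "sin (pi * of_int r / real d) = 0 \<longleftrightarrow> int d dvd r"
proof -
  have "pi * of_int r / real d = of_int i * pi \<longleftrightarrow> r = int d * i" for i
  proof -
    have "pi * of_int r / real d = of_int i * pi \<longleftrightarrow> real_of_int r = real_of_int (int d * i)"
      using assms by (auto simp: field_simps)
    then show ?thesis
      by (simp only: of_int_eq_iff)
  qed
  then show ?thesis
    unfolding sin_zero_iff_int2 dvd_def by auto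
qed

lemma cos_pi_div_eq_0_iff:
  assumes "d > 0"
  shows "cos (pi * of_int r / (2 * real d)) = 0 \<longleftrightarrow> 2 * int d dvd r - int d"
proof -
  have "pi * of_int r / (2 * real d) = of_int i * pi + pi / 2 \<longleftrightarrow> r - int d = 2 * int d * i" for i
  proof -
    have "pi * of_int r / (2 * real d) = of_int i * pi + pi / 2 \<longleftrightarrow>
          pi * real_of_int r = pi * (2 * real d * of_int i + real d)"
      using assms by (simp add: field_simps)
    also have "\<dots> \<longleftrightarrow> real_of_int r = real_of_int (2 * int d * i + int d)"
      by simp
    finally show ?thesis
      by (simp only: of_int_eq_iff) linarith
  qed
  then show ?thesis
    unfolding cos_zero_iff_int2 dvd_def by auto
qed

lemma sin_pi_div_eq_iff:
  assumes "d > 0"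
  shows "sin (pi * of_int x / (2 * real d)) = sin (pi * of_int y / (2 * real d)) \<longleftrightarrow>
         4 * int d dvd x - y \<or> 4 * int d dvd x + y - 2 * int d"
proof -
  let ?x = "pi * of_int x / (2 * real d)" and ?y = "pi * of_int y / (2 * real d)"
  have "sin ?x = sin ?y \<longleftrightarrow> sin ((?x - ?y) / 2) = 0 \<or> cos ((?x + ?y) / 2) = 0"
    using sin_diff_sin[of ?x ?y] by auto
  also have "(?x - ?y) / 2 = pi * of_int (x - y) / real (4 * d)"
    using assms by (simp add: field_simps)
  also have "(?x + ?y) / 2 = pi * of_int (x + y) / (2 * real (2 * d))"
    using assms by (simp add: field_simps)
  also have "sin (pi * of_int (x - y) / real (4 * d)) = 0 \<longleftrightarrow> 4 * int d dvd x - y"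
    using sin_pi_div_eq_0_iff[of "4 * d" "x - y"] assms by simp
  also have "cos (pi * of_int (x + y) / (2 * real (2 * d))) = 0 \<longleftrightarrow> 4 * int d dvd x + y - 2 * int d"
    using cos_pi_div_eq_0_iff[of "2 * d" "x + y"] assms by (simp add: mult_ac)
  finally show ?thesis .
qed

lemma abs_sin_less_1_iff: "\<bar>sin (t::real)\<bar> < 1 \<longleftrightarrow> cos t \<noteq> 0"
proof -
  have "\<bar>sin t\<bar> < 1 \<longleftrightarrow> (sin t)\<^sup>2 < 1"
    using abs_square_less_1[of "sin t"] by simp
  also have "\<dots> \<longleftrightarrow> 0 < (cos t)\<^sup>2"
    using sin_cos_squared_add[of t] by linarith
  also have "\<dots> \<longleftrightarrow> cos t \<noteq> 0"
    by simp
  finally show ?thesis .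
qed

lemma eq_if_dvd_diff_in_period:
  fixes M Q l1 l2 :: int
  assumes "coprime M Q" "4 * Q dvd l1 - l2" "4 * M dvd l1 - l2"
    and "1 \<le> l1" "l1 \<le> 4 * M * Q" "1 \<le> l2" "l2 \<le> 4 * M * Q"
  shows "l1 = l2"
proof (rule ccontr)
  assume "l1 \<noteq> l2"
  obtain e where e: "l1 - l2 = 4 * e"
    using assms(2) by (metis dvd_mult_left dvdE)
  have "M dvd e" "Q dvd e"
    using assms(3,2) by (simp_all add: e)
  then have "M * Q dvd e"
    using assms(1) by (rule divides_mult)
  then have "4 * M * Q dvd l1 - l2"
    by (simp add: e mult.assoc)
  then have "\<bar>4 * M * Q\<bar> \<le> \<bar>l1 - l2\<bar>"
    using \<open>l1 \<noteq> l2\<close> by (intro dvd_imp_le_int) simp_all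
  with assms(4-7) show False
    by linarith
qed

(* With M = n and Q = n + p, s is the other index at which the curve passes through the k-th node. *)
lemma mirror_index_exists:
  fixes M Q k :: int
  assumes "M > 0" "Q > 0" "coprime M Q" "even (k - M)"
  obtains s where "1 \<le> s" "s \<le> 4 * M * Q" "4 * Q dvd s - k" "4 * M dvd s + k - 2 * M"
proof -
  obtain u v where uv: "u * Q + v * M = 1"
    using bezout_int[of Q M] assms(3) by (auto simp: coprime_iff_gcd_eq_1 gcd.commute)
  have "even (M - k)"
    using assms(4) by (simp add: dvd_diff_commute)
  then obtain c where c: "M - k = 2 * c"
    by (elim evenE)
  define N where "N = 4 * M * Q"
  define s0 where "s0 = k + 4 * Q * u * c"
  define s where "s = (s0 - 1) mod N + 1"
  have "N > 0"
    using assms(1,2) by (simp add: N_def)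
  have "s - s0 = - (N * ((s0 - 1) div N))"
    by (simp add: s_def minus_mod_eq_mult_div[symmetric])
  then have "4 * Q dvd s - s0" "4 * M dvd s - s0"
    by (simp_all add: N_def mult.assoc mult.left_commute[of M])
  moreover have "s0 - k = 4 * Q * (u * c)"
    by (simp add: s0_def mult_ac)
  moreover have "s0 + k - 2 * M = 4 * M * (- c * v)"
    unfolding s0_def using uv c by algebra
  moreover have "s - k = (s - s0) + (s0 - k)" "s + k - 2 * M = (s - s0) + (s0 + k - 2 * M)"
    by simp_all
  ultimately have "4 * Q dvd s - k" "4 * M dvd s + k - 2 * M"
    by (simp_all only: dvd_add dvd_triv_left)
  moreover have "1 \<le> s" "s \<le> N"
    using pos_mod_bound[OF \<open>N > 0\<close>, of "s0 - 1"] pos_mod_sign[OF \<open>N > 0\<close>, of "s0 - 1"]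
    by (simp_all add: s_def)
  ultimately show thesis
    using that N_def by blast
qed

lemma not_dvd_reflection_of_parity:
  fixes M Q k l :: int
  assumes "4 * M dvd l - k \<or> 4 * M dvd l + k - 2 * M" "odd (M + Q)" "even (k - M)"
  shows "\<not> 4 * Q dvd l + k - 2 * Q"
proof
  assume "4 * Q dvd l + k - 2 * Q"
  then have "4 dvd l + k - 2 * Q"
    using dvd_mult_left by blast
  moreover have "4 dvd l - k \<or> 4 dvd l + k - 2 * M"
    using assms(1) dvd_mult_left by blast
  ultimately show False
    using assms(2,3) by presburger
qed

lemma sine_fibre_eq_pair:
  fixes M Q k s :: int
  assumes "coprime M Q" "odd (M + Q)" "even (k - M)" "1 \<le> k" "k \<le> 4 * M * Q"
    and s: "1 \<le> s" "s \<le> 4 * M * Q" "4 * Q dvd s - k" "4 * M dvd s + k - 2 * M"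
  shows "{l \<in> {1..4 * M * Q}. (4 * Q dvd l - k \<or> 4 * Q dvd l + k - 2 * Q)
                            \<and> (4 * M dvd l - k \<or> 4 * M dvd l + k - 2 * M)} = {k, s}"
    (is "?F = _")
proof
  show "{k, s} \<subseteq> ?F"
    using assms by auto
next
  have unique: "l1 = l2" if "l1 \<in> {1..4 * M * Q}" "l2 \<in> {1..4 * M * Q}"
    "4 * Q dvd l1 - l2" "4 * M dvd l1 - l2" for l1 l2
    using eq_if_dvd_diff_in_period[OF assms(1)] that by auto
  show "?F \<subseteq> {k, s}"
  proof
    fix l assume "l \<in> ?F"
    then have l: "l \<in> {1..4 * M * Q}" and Q: "4 * Q dvd l - k \<or> 4 * Q dvd l + k - 2 * Q"
      and M: "4 * M dvd l - k \<or> 4 * M dvd l + k - 2 * M"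
      by auto
    have "\<not> 4 * Q dvd l + k - 2 * Q"
      using M assms(2,3) by (rule not_dvd_reflection_of_parity)
    then have "4 * Q dvd l - k"
      using Q by blast
    from M show "l \<in> {k, s}"
    proof
      assume "4 * M dvd l - k"
      then show ?thesis
        using unique[of l k] l assms(4,5) \<open>4 * Q dvd l - k\<close> by auto
    next
      assume "4 * M dvd l + k - 2 * M"
      then have "4 * M dvd (l + k - 2 * M) - (s + k - 2 * M)"
        using s(4) by (rule dvd_diff)
      moreover have "4 * Q dvd (l - k) - (s - k)"
        using \<open>4 * Q dvd l - k\<close> s(3) by (rule dvd_diff)
      ultimately show ?thesis
        using unique[of l s] l s(1,2) by simp
    qed
  qed
qed

(* The first disjunct is always false here; stating it keeps the lemma symmetric in M and Q. *)
lemma card_sine_fibre: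
  fixes M Q k :: int
  assumes "M > 0" "Q > 0" "coprime M Q" "odd (M + Q)" "even (k - M)" "1 \<le> k" "k \<le> 4 * M * Q"
  shows "card {l \<in> {1..4 * M * Q}. (4 * Q dvd l - k \<or> 4 * Q dvd l + k - 2 * Q)
                                  \<and> (4 * M dvd l - k \<or> 4 * M dvd l + k - 2 * M)}
         = (if 2 * Q dvd k - Q \<or> 2 * M dvd k - M then 1 else 2)"
proof -
  obtain s where s: "1 \<le> s" "s \<le> 4 * M * Q" "4 * Q dvd s - k" "4 * M dvd s + k - 2 * M"
    using mirror_index_exists[OF assms(1,2,3,5)] .
  have "odd (k - Q)"
    using assms(4,5) by presburger
  then have "\<not> 2 * Q dvd k - Q"
    using dvd_mult_left by blast
  moreover have "s = k \<longleftrightarrow> 2 * M dvd k - M"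
  proof
    assume "s = k"
    then have "2 * (2 * M) dvd 2 * (k - M)"
      using s(4) by (simp add: algebra_simps)
    then show "2 * M dvd k - M"
      by (simp only: dvd_mult_cancel_left) simp
  next
    assume "2 * M dvd k - M"
    then have "4 * M dvd 2 * (k - M)"
      using mult_dvd_mono[OF dvd_refl[of 2]] by fastforce
    then have "4 * M dvd 2 * (k - M) - (s + k - 2 * M)"
      using s(4) by (rule dvd_diff)
    then have "4 * M dvd s - k"
      by (simp add: algebra_simps dvd_diff_commute)
    then show "s = k"
      using eq_if_dvd_diff_in_period[OF assms(3) s(3)] s(1,2) assms(6,7) by simp
  qed
  ultimately show ?thesis
    unfolding sine_fibre_eq_pair[OF assms(3,4,5,6,7) s] by auto
qed

lemma Lisa_eq_image: "Lisa n p = lisa_node n p ` {1..4 * n * (n + p)}"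
  unfolding Lisa_def lisa_node_def by auto

lemma lisa_node_eq:
  assumes "n > 0" "p > 0"
  shows "lisa_node n p k =
    (sin (pi * of_int (int k) / (2 * real (n + p))), sin (pi * of_int (int k) / (2 * real n)))"
proof -
  define q where "q = n + p"
  have "q > 0"
    using assms(2) by (simp add: q_def)
  have "real n * (2 * pi * real k / real (4 * n * q)) = pi * of_int (int k) / (2 * real q)"
    and "real q * (2 * pi * real k / real (4 * n * q)) = pi * of_int (int k) / (2 * real n)"
    using assms(1) \<open>q > 0\<close> by (simp_all add: field_simps)
  then show ?thesis
    by (simp add: lisa_node_def lissajous_def q_def)
qed

lemma card_filter_nat_atLeastAtMost:
  "card {l \<in> {a..b}. P (int l)} = card {l \<in> {int a..int b}. P l}"
proof -
  have "{l \<in> {int a..int b}. P l} = int ` {l \<in> {a..b}. P (int l)}"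
  proof (intro equalityI subsetI)
    fix l assume "l \<in> {l \<in> {int a..int b}. P l}"
    then show "l \<in> int ` {l \<in> {a..b}. P (int l)}"
      by (auto intro!: image_eqI[of _ int "nat l"])
  qed auto
  then show ?thesis
    by (simp add: card_image)
qed

lemma card_lisa_node_fibre:
  assumes "n > 0" "p > 0" "odd p" "coprime n (n + p)" "k \<in> {1..4 * n * (n + p)}"
  shows "card {l \<in> {1..4 * n * (n + p)}. lisa_node n p l = lisa_node n p k} =
    (if cos (pi * of_int (int k) / (2 * real (n + p))) = 0 \<or> cos (pi * of_int (int k) / (2 * real n)) = 0
     then 1 else 2)"
proof -
  define M Q K where "M = int n" and "Q = int (n + p)" and "K = int k"
  have "M > 0" "Q > 0" "odd (M + Q)"
    using assms(1-3) by (simp_all add: M_def Q_def)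
  have "coprime M Q"
    using assms(4) unfolding M_def Q_def by (simp only: coprime_int_iff)
  have MQ: "4 * M * Q = int (4 * n * (n + p))"
    by (simp add: M_def Q_def)
  have K: "1 \<le> K" "K \<le> 4 * M * Q"
    using assms(5) unfolding MQ K_def of_nat_le_iff by simp_all
  define F where "F l \<longleftrightarrow> (4 * Q dvd l - K \<or> 4 * Q dvd l + K - 2 * Q) \<and>
      (4 * M dvd l - K \<or> 4 * M dvd l + K - 2 * M)" for l
  have "lisa_node n p l = lisa_node n p k \<longleftrightarrow> F (int l)" for l
    using assms(1,2)
    by (simp only: lisa_node_eq prod.inject sin_pi_div_eq_iff add_pos_pos F_def M_def Q_def K_def)
  then have "card {l \<in> {1..4 * n * (n + p)}. lisa_node n p l = lisa_node n p k} =
      card {l \<in> {int 1..int (4 * n * (n + p))}. F l}"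
    by (simp only: card_filter_nat_atLeastAtMost)
  also have "\<dots> = card {l \<in> {1..4 * M * Q}. F l}"
    unfolding MQ of_nat_1 ..
  also have "\<dots> = (if 2 * Q dvd K - Q \<or> 2 * M dvd K - M then 1 else 2)"
  proof (cases "even (K - M)")
    case True
    then show ?thesis
      using card_sine_fibre[OF \<open>M > 0\<close> \<open>Q > 0\<close> \<open>coprime M Q\<close> \<open>odd (M + Q)\<close> True K]
      by (simp add: F_def)
  next
    case False
    then have "even (K - Q)"
      using \<open>odd (M + Q)\<close> by presburger
    with card_sine_fibre[of Q M K] show ?thesis
      using \<open>M > 0\<close> \<open>Q > 0\<close> \<open>coprime M Q\<close> \<open>odd (M + Q)\<close> K
      by (simp add: F_def coprime_commute add.commute mult.commute mult.left_commute conj_commute disj_commute)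
  qed
  also have "\<dots> = (if cos (pi * of_int (int k) / (2 * real (n + p))) = 0 \<or>
                      cos (pi * of_int (int k) / (2 * real n)) = 0 then 1 else 2)"
    unfolding cos_pi_div_eq_0_iff[OF assms(1)] cos_pi_div_eq_0_iff[OF add_pos_pos[OF assms(1,2)]]
      M_def Q_def K_def ..
  finally show ?thesis .
qed

lemma lisa_weight_lisa_node:
  assumes "n > 0" "p > 0" "odd p" "coprime n (n + p)" "k \<in> {1..4 * n * (n + p)}"
  shows "lisa_weight n p (lisa_node n p k) =
    real (card {l \<in> {1..4 * n * (n + p)}. lisa_node n p l = lisa_node n p k}) / real (4 * n * (n + p))"
proof -
  have "lisa_weight n p (lisa_node n p k) =
    real (if cos (pi * of_int (int k) / (2 * real (n + p))) = 0 \<or> cos (pi * of_int (int k) / (2 * real n)) = 0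
          then 1 else 2) / real (4 * n * (n + p))"
    using assms(1,2) by (simp add: lisa_weight_def lisa_node_eq abs_sin_less_1_iff)
  then show ?thesis
    unfolding card_lisa_node_fibre[OF assms] .
qed

lemma sum_Lisa_lisa_weight:
  assumes "n > 0" "p > 0" "odd p" "coprime n (n + p)"
  shows "(\<Sum>A\<in>Lisa n p. lisa_weight n p A * h A) =
    (\<Sum>k=1..4 * n * (n + p). h (lisa_node n p k)) / real (4 * n * (n + p))"
proof -
  define N where "N = 4 * n * (n + p)"
  define g where "g = lisa_node n p"
  have "(\<Sum>k=1..N. h (g k)) / real N = (\<Sum>k=1..N. h (g k) / real N)"
    by (simp add: sum_divide_distrib)
  also have "\<dots> = (\<Sum>A\<in>g ` {1..N}. \<Sum>k\<in>{l \<in> {1..N}. g l = A}. h (g k) / real N)"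
    by (rule sum.image_gen) simp
  also have "\<dots> = (\<Sum>A\<in>g ` {1..N}. lisa_weight n p A * h A)"
  proof (rule sum.cong[OF refl])
    fix A assume "A \<in> g ` {1..N}"
    then obtain k where k: "k \<in> {1..N}" and A: "A = g k"
      by auto
    have "(\<Sum>l\<in>{l \<in> {1..N}. g l = A}. h (g l) / real N) = (\<Sum>l\<in>{l \<in> {1..N}. g l = A}. h A / real N)"
      by (rule sum.cong) auto
    also have "\<dots> = lisa_weight n p A * h A"
      using lisa_weight_lisa_node[OF assms, of k] k by (simp add: A g_def N_def)
    finally show "(\<Sum>l\<in>{l \<in> {1..N}. g l = A}. h (g l) / real N) = lisa_weight n p A * h A" .
  qed
  finally show ?thesis
    by (simp add: Lisa_eq_image g_def N_def)
qed

lemma sum_lisa_node_cheb_expansion: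
  fixes c :: "nat \<times> nat \<Rightarrow> real"
  assumes "n > 0" "p > 0" "odd p" "coprime n (n + p)"
  shows "(\<Sum>k=1..4 * n * (n + p). \<Sum>s\<in>GammaQ n p.
            c s * cheb (fst s) (fst (lisa_node n p k)) * cheb (snd s) (snd (lisa_node n p k)))
         = real (4 * n * (n + p)) * c (0, 0)"
proof -
  define N where "N = 4 * n * (n + p)"
  have "(\<Sum>k=1..N. \<Sum>s\<in>GammaQ n p.
            c s * cheb (fst s) (fst (lisa_node n p k)) * cheb (snd s) (snd (lisa_node n p k)))
      = (\<Sum>s\<in>GammaQ n p. c s *
          (\<Sum>k=1..N. cheb (fst s) (fst (lisa_node n p k)) * cheb (snd s) (snd (lisa_node n p k))))"
    by (subst sum.swap) (simp add: sum_distrib_left mult_ac)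
  also have "\<dots> = (\<Sum>s\<in>GammaQ n p. c s * (if s = (0, 0) then real N else 0))"
    using lisa_node_cheb_sum[OF assms] by (intro sum.cong) (auto simp: N_def)
  also have "\<dots> = real N * c (0, 0)"
    using finite_GammaQ zero_in_GammaQ[OF assms(1)] by (simp add: if_distrib cong: if_cong)
  finally show ?thesis
    unfolding N_def .
qed

theorem theorem1:
  fixes n p :: nat and P :: "real \<times> real \<Rightarrow> real"
  assumes "n > 0" "p > 0" "odd p" "coprime n (n + p)"
    and "P \<in> PiQ n p"
  shows "1 / pi\<^sup>2 * (LBINT x=-1..1. (LBINT y=-1..1.
            P (x, y) * (1 / sqrt (1 - x\<^sup>2)) * (1 / sqrt (1 - y\<^sup>2))))
         = (\<Sum>A\<in>Lisa n p. lisa_weight n p A * P A)"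
proof -
  obtain c where P: "P z = (\<Sum>s\<in>GammaQ n p. c s * cheb (fst s) (fst z) * cheb (snd s) (snd z))" for z
    using assms(5) unfolding PiQ_def by (auto simp: split_def)
  have "(LBINT x=-1..1. (LBINT y=-1..1. P (x, y) * cheb_weight x * cheb_weight y)) = pi\<^sup>2 * c (0, 0)"
    unfolding P fst_conv snd_conv
    using cheb_expansion_weighted_integral[OF finite_GammaQ zero_in_GammaQ[OF assms(1)]] .
  moreover have "(\<Sum>k=1..4 * n * (n + p). P (lisa_node n p k)) = real (4 * n * (n + p)) * c (0, 0)"
    unfolding P using sum_lisa_node_cheb_expansion[OF assms(1-4)] .
  ultimately show ?thesis
    using sum_Lisa_lisa_weight[OF assms(1-4), of P] assms(1,2) by simp
qed

end
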